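(* Let $n\ge1$ and let $A_n(1)$ be the $n\times(2n-1)$ matrix $\big[\binom{n+k-1-i}{k-i}\big]_{1\le i\le n,\,1\le k\le 2n-1}$ (with $\binom{m}{j}=0$ for $j<0$). For a strictly increasing map $\sigma:\{1,\ldots,n\}\to\{1,\ldots,2n-1\}$, let $\mathrm A_\sigma(1)$ be the $n\times n$ minor of $A_n(1)$ formed by the columns $\sigma_1<\cdots<\sigma_n$, and let $\tilde\sigma$ be the strictly increasing map $\tilde\sigma_i=2n-\sigma_{n+1-i}$. Then $\mathrm A_\sigma(1)=\mathrm A_{\tilde\sigma}(1)>0$. *)

theory Defs
  imports "Jordan_Normal_Form.Determinant"
begin

definition A1_entry :: "nat \<Rightarrow> nat \<Rightarrow> nat \<Rightarrow> int" where
  "A1_entry n i k = (if i \<le> k then int ((n + k - 1 - i) choose (k - i)) else 0)"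

text \<open>The n x n minor of A_n(1) formed by the columns sigma 1 < ... < sigma n
  (sigma is 1-based; the JNF matrix is 0-based).\<close>
definition A_minor :: "nat \<Rightarrow> (nat \<Rightarrow> nat) \<Rightarrow> int" where
  "A_minor n \<sigma> = det (mat n n (\<lambda>(r, c). A1_entry n (r + 1) (\<sigma> (c + 1))))"

definition sigma_tilde :: "nat \<Rightarrow> (nat \<Rightarrow> nat) \<Rightarrow> nat \<Rightarrow> nat" where
  "sigma_tilde n \<sigma> i = 2 * n - \<sigma> (n + 1 - i)"

end

theory Submission
  imports Defs "HOL-Computational_Algebra.Polynomial"
begin

text \<open>
  With 0-based row index r, the entry of A_n(1) in column k is binomial(k - r + n - 2, n - 1),
  i.e. the rising factorial (k - r)^(n-1) divided by (n-1)!; this polynomial in k of degree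
  n - 1 also vanishes at the columns k = 1, ..., r where the entry is 0. Hence every minor
  factors as det C times the Vandermonde product of the chosen columns, where C is the
  coefficient matrix of these row polynomials and does not depend on the columns. The minor on
  the columns 1, ..., n is unitriangular, so det C > 0. The Vandermonde product is positive for
  increasing columns and invariant under the reflection sigma to sigma-tilde, which reverses the
  order of the columns and maps each column k to 2n - k.
\<close>

definition vandermonde :: "nat \<Rightarrow> (nat \<Rightarrow> 'a::comm_ring_1) \<Rightarrow> 'a mat" where
  "vandermonde n x = mat n n (\<lambda>(i, j). x j ^ i)"

lemma vandermonde_row_reduction:
  fixes x :: "nat \<Rightarrow> 'a::comm_ring_1"
  shows "mat (Suc n) (Suc n) (\<lambda>(i, k). if k = i then 1 else if Suc k = i then - x 0 else 0)
           * vandermonde (Suc n) x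
         = mat (Suc n) (Suc n) (\<lambda>(i, j). if i = 0 then 1 else x j ^ (i - 1) * (x j - x 0))"
    (is "?L * ?V = ?W")
proof (rule eq_matI)
  fix i j assume "i < dim_row ?W" and "j < dim_col ?W"
  then have i: "i < Suc n" and j: "j < Suc n" by auto
  have "(?L * ?V) $$ (i, j) = (\<Sum>k<Suc n. ?L $$ (i, k) * x j ^ k)"
    using i j by (simp add: vandermonde_def scalar_prod_def atLeast0LessThan)
  also have "\<dots> = (\<Sum>k<Suc n. (if k = i then x j ^ k else 0) + (if Suc k = i then - x 0 * x j ^ k else 0))"
    by (rule sum.cong) (auto simp: i)
  also have "\<dots> = (if i = 0 then 1 else x j ^ i - x 0 * x j ^ (i - 1))"
    using i by (cases i) (auto simp: sum.distrib)
  also have "\<dots> = ?W $$ (i, j)"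
    using i j by (cases i) (auto simp: algebra_simps)
  finally show "(?L * ?V) $$ (i, j) = ?W $$ (i, j)" .
qed (auto simp: vandermonde_def)

lemma det_vandermonde_Suc:
  fixes x :: "nat \<Rightarrow> 'a::comm_ring_1"
  shows "det (vandermonde (Suc n) x) = (\<Prod>j<n. x (Suc j) - x 0) * det (vandermonde n (\<lambda>j. x (Suc j)))"
proof -
  define L where "L = mat (Suc n) (Suc n) (\<lambda>(i, k). if k = i then 1 else if Suc k = i then - x 0 else (0::'a))"
  define W where "W = mat (Suc n) (Suc n) (\<lambda>(i, j). if i = 0 then 1 else x j ^ (i - 1) * (x j - x 0))"
  define D where "D = mat n n (\<lambda>(i, j). if i = j then x (Suc j) - x 0 else (0::'a))"
  have "det L = 1"
    by (subst det_lower_triangular[of "Suc n"]) (auto simp: L_def prod_list_diag_prod)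
  then have "det (vandermonde (Suc n) x) = det W"
    using det_mult[of L "Suc n" "vandermonde (Suc n) x"] vandermonde_row_reduction[of n x]
    by (simp add: L_def W_def vandermonde_def)
  also have "\<dots> = (\<Sum>i<Suc n. W $$ (i, 0) * cofactor W i 0)"
    by (rule laplace_expansion_column) (auto simp: W_def)
  also have "\<dots> = det (mat_delete W 0 0)"
    by (subst sum.lessThan_Suc_shift) (simp add: W_def cofactor_def)
  also have "mat_delete W 0 0 = vandermonde n (\<lambda>j. x (Suc j)) * D"
  proof (rule eq_matI)
    fix i j assume "i < dim_row (vandermonde n (\<lambda>j. x (Suc j)) * D)" "j < dim_col (vandermonde n (\<lambda>j. x (Suc j)) * D)"
    then have i: "i < n" and j: "j < n" by (auto simp: vandermonde_def D_def)
    have "(\<Sum>k\<in>{0..<n}. x (Suc k) ^ i * (if k = j then x (Suc j) - x 0 else 0)) = x (Suc j) ^ i * (x (Suc j) - x 0)"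
      using j by (simp add: if_distrib cong: if_cong)
    then show "mat_delete W 0 0 $$ (i, j) = (vandermonde n (\<lambda>j. x (Suc j)) * D) $$ (i, j)"
      using i j by (simp add: mat_delete_def W_def D_def vandermonde_def scalar_prod_def)
  qed (auto simp: W_def D_def vandermonde_def mat_delete_def)
  also have "det \<dots> = det (vandermonde n (\<lambda>j. x (Suc j))) * det D"
    by (rule det_mult) (auto simp: vandermonde_def D_def)
  also have "det D = (\<Prod>j<n. x (Suc j) - x 0)"
    by (subst det_upper_triangular[of _ n]) (auto simp: D_def prod_list_diag_prod atLeast0LessThan)
  finally show ?thesis by (simp add: mult.commute)
qed

lemma det_vandermonde:
  fixes x :: "nat \<Rightarrow> 'a::comm_ring_1"
  shows "det (vandermonde n x) = (\<Prod>j<n. \<Prod>i<j. x j - x i)"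
proof (induction n arbitrary: x)
  case 0
  show ?case by (simp add: vandermonde_def det_def)
next
  case (Suc n)
  have "(\<Prod>j<Suc n. \<Prod>i<j. x j - x i) = (\<Prod>j<n. \<Prod>i<Suc j. x (Suc j) - x i)"
    by (subst prod.lessThan_Suc_shift) simp
  also have "\<dots> = (\<Prod>j<n. (x (Suc j) - x 0) * (\<Prod>i<j. x (Suc j) - x (Suc i)))"
    by (intro prod.cong refl prod.lessThan_Suc_shift)
  finally show ?case
    using Suc.IH[of "\<lambda>j. x (Suc j)"] by (simp add: det_vandermonde_Suc prod.distrib)
qed

lemma det_poly_rows:
  fixes p :: "nat \<Rightarrow> 'a::comm_ring_1 poly"
  assumes "\<And>r. r < n \<Longrightarrow> degree (p r) < n"
  shows "det (mat n n (\<lambda>(r, c). poly (p r) (y c)))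
           = det (mat n n (\<lambda>(r, d). coeff (p r) d)) * (\<Prod>j<n. \<Prod>i<j. y j - y i)"
proof -
  have poly_sum: "poly (p r) t = (\<Sum>d<n. coeff (p r) d * t ^ d)" if "r < n" for r t
  proof -
    have "poly (p r) t = (\<Sum>d\<le>degree (p r). coeff (p r) d * t ^ d)"
      by (rule poly_altdef)
    also have "\<dots> = (\<Sum>d<n. coeff (p r) d * t ^ d)"
      using assms[OF that] by (intro sum.mono_neutral_left) (auto simp: coeff_eq_0)
    finally show ?thesis .
  qed
  have "mat n n (\<lambda>(r, c). poly (p r) (y c)) = mat n n (\<lambda>(r, d). coeff (p r) d) * vandermonde n y"
    by (rule eq_matI) (auto simp: vandermonde_def scalar_prod_def poly_sum atLeast0LessThan)
  then show ?thesis
    using det_mult[of _ n "vandermonde n y"] det_vandermonde[of n y]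
    by (simp add: vandermonde_def)
qed

lemma prod_ordered_pairs_reflect:
  fixes f :: "nat \<Rightarrow> nat \<Rightarrow> 'a::comm_monoid_mult"
  shows "(\<Prod>j<n. \<Prod>i<j. f i j) = (\<Prod>j<n. \<Prod>i<j. f (n - 1 - j) (n - 1 - i))"
proof -
  have "(\<Prod>j<n. \<Prod>i<j. f i j) = (\<Prod>(j, i)\<in>Sigma {..<n} (\<lambda>j. {..<j}). f i j)"
    by (rule prod.Sigma) auto
  also have "\<dots> = (\<Prod>(j, i)\<in>Sigma {..<n} (\<lambda>j. {..<j}). f (n - 1 - j) (n - 1 - i))"
    by (rule prod.reindex_bij_witness[where i="\<lambda>(j, i). (n - 1 - i, n - 1 - j)"
          and j="\<lambda>(j, i). (n - 1 - i, n - 1 - j)"]) auto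
  also have "\<dots> = (\<Prod>j<n. \<Prod>i<j. f (n - 1 - j) (n - 1 - i))"
    by (rule prod.Sigma[symmetric]) auto
  finally show ?thesis .
qed

lemma vandermonde_prod_reflect:
  fixes y :: "nat \<Rightarrow> 'a::comm_ring_1"
  shows "(\<Prod>j<n. \<Prod>i<j. (c - y (n - 1 - j)) - (c - y (n - 1 - i))) = (\<Prod>j<n. \<Prod>i<j. y j - y i)"
  using prod_ordered_pairs_reflect[of "\<lambda>i j. y j - y i" n] by simp

lemma vandermonde_prod_pos:
  fixes y :: "nat \<Rightarrow> 'a::linordered_idom"
  assumes "\<And>i j. i < j \<Longrightarrow> j < n \<Longrightarrow> y i < y j"
  shows "0 < (\<Prod>j<n. \<Prod>i<j. y j - y i)"
  using assms by (intro prod_pos) auto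

definition binomial_row :: "nat \<Rightarrow> nat \<Rightarrow> rat poly" where
  "binomial_row n r = smult (1 / fact (n - 1)) (\<Prod>i<n - 1. [:of_nat i - of_nat r, 1:])"

lemma poly_binomial_row:
  "poly (binomial_row n r) y = pochhammer (y - of_nat r) (n - 1) / fact (n - 1)"
  unfolding binomial_row_def poly_smult poly_prod pochhammer_prod atLeast0LessThan
  by (simp add: algebra_simps)

lemma degree_binomial_row: "degree (binomial_row n r) = n - 1"
  by (simp add: binomial_row_def degree_prod_sum_eq)

lemma A1_entry_eq_poly_binomial_row:
  assumes "r < n" and "1 \<le> k"
  shows "of_int (A1_entry n (Suc r) k) = poly (binomial_row n r) (of_nat k)"
proof (cases "Suc r \<le> k")
  case True
  define m where "m = k - Suc r"
  have k: "k = m + Suc r"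
    using True m_def by simp
  have "(m + n - 1) choose m = (m + n - 1) choose (n - 1)"
    using binomial_symmetric[of m "m + n - 1"] assms by simp
  then have "A1_entry n (Suc r) k = int ((m + (n - 1)) choose (n - 1))"
    unfolding A1_entry_def using True assms by (simp add: k algebra_simps)
  moreover have "(of_nat k - of_nat r :: rat) = of_nat (m + (n - 1)) - of_nat (n - 1) + 1"
    using assms by (simp add: k)
  ultimately show ?thesis
    by (simp add: poly_binomial_row binomial_gbinomial gbinomial_pochhammer' del: of_nat_add)
next
  case False
  then have "pochhammer (of_nat k - of_nat r :: rat) (n - 1) = 0"
    unfolding pochhammer_eq_0_iff using assms
    by (intro exI[of _ "r - k"]) (auto simp: of_nat_diff)
  then show ?thesis
    using False unfolding A1_entry_def by (simp add: poly_binomial_row)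
qed

definition binomial_row_coeff_det :: "nat \<Rightarrow> rat" where
  "binomial_row_coeff_det n = det (mat n n (\<lambda>(r, d). coeff (binomial_row n r) d))"

lemma A_minor_eq_vandermonde_prod:
  assumes "\<And>c. c < n \<Longrightarrow> 1 \<le> \<tau> (Suc c)"
  shows "of_int (A_minor n \<tau>)
           = binomial_row_coeff_det n * (\<Prod>j<n. \<Prod>i<j. of_nat (\<tau> (Suc j)) - of_nat (\<tau> (Suc i)))"
proof -
  have "(of_int (A_minor n \<tau>) :: rat)
          = det (map_mat of_int (mat n n (\<lambda>(r, c). A1_entry n (r + 1) (\<tau> (c + 1)))))"
    unfolding A_minor_def by (rule of_int_hom.hom_det[symmetric])
  also have "map_mat of_int (mat n n (\<lambda>(r, c). A1_entry n (r + 1) (\<tau> (c + 1))))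
               = mat n n (\<lambda>(r, c). poly (binomial_row n r) (of_nat (\<tau> (Suc c))))"
    by (rule eq_matI) (auto intro!: A1_entry_eq_poly_binomial_row assms)
  also have "det \<dots> = binomial_row_coeff_det n * (\<Prod>j<n. \<Prod>i<j. of_nat (\<tau> (Suc j)) - of_nat (\<tau> (Suc i)))"
    unfolding binomial_row_coeff_det_def by (rule det_poly_rows) (simp add: degree_binomial_row)
  finally show ?thesis .
qed

lemma A_minor_id: "A_minor n (\<lambda>i. i) = 1"
  unfolding A_minor_def
  by (subst det_upper_triangular[of _ n])
     (auto simp: prod_list_diag_prod A1_entry_def upper_triangular_def)

lemma binomial_row_coeff_det_pos: "0 < binomial_row_coeff_det n"
proof -
  let ?P = "\<Prod>j<n. \<Prod>i<j. of_nat (Suc j) - of_nat (Suc i) :: rat"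
  have "binomial_row_coeff_det n * ?P = 1"
    using A_minor_eq_vandermonde_prod[of n "\<lambda>i. i"] by (simp add: A_minor_id)
  moreover have "0 < ?P"
    by (rule vandermonde_prod_pos) simp
  ultimately show ?thesis
    using zero_less_mult_pos2[of "binomial_row_coeff_det n" ?P] by simp
qed

lemma sigma_tilde_Suc:
  assumes "c < n"
  shows "sigma_tilde n \<sigma> (Suc c) = 2 * n - \<sigma> (Suc (n - 1 - c))"
  using assms by (simp add: sigma_tilde_def Suc_diff_Suc)

lemma sigma_tilde_ge_1:
  assumes "\<And>c. c < n \<Longrightarrow> \<sigma> (Suc c) < 2 * n" and "c < n"
  shows "1 \<le> sigma_tilde n \<sigma> (Suc c)"
  using assms(1)[of "n - 1 - c"] assms(2) by (auto simp: sigma_tilde_Suc)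

lemma vandermonde_prod_sigma_tilde:
  assumes "\<And>c. c < n \<Longrightarrow> \<sigma> (Suc c) < 2 * n"
  shows "(\<Prod>j<n. \<Prod>i<j. of_nat (sigma_tilde n \<sigma> (Suc j)) - of_nat (sigma_tilde n \<sigma> (Suc i)) :: rat)
           = (\<Prod>j<n. \<Prod>i<j. of_nat (\<sigma> (Suc j)) - of_nat (\<sigma> (Suc i)))"
proof -
  define y where "y i = (of_nat (\<sigma> (Suc i)) :: rat)" for i
  have "of_nat (sigma_tilde n \<sigma> (Suc c)) = of_nat (2 * n) - y (n - 1 - c)" if "c < n" for c
    using assms[of "n - 1 - c"] that by (simp add: sigma_tilde_Suc y_def of_nat_diff)
  then have "(\<Prod>j<n. \<Prod>i<j. of_nat (sigma_tilde n \<sigma> (Suc j)) - of_nat (sigma_tilde n \<sigma> (Suc i)))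
               = (\<Prod>j<n. \<Prod>i<j. (of_nat (2 * n) - y (n - 1 - j)) - (of_nat (2 * n) - y (n - 1 - i)))"
    by (intro prod.cong refl) simp
  also have "\<dots> = (\<Prod>j<n. \<Prod>i<j. y j - y i)"
    by (rule vandermonde_prod_reflect)
  finally show ?thesis
    by (simp add: y_def)
qed

theorem proposition5:
  fixes n :: nat and \<sigma> :: "nat \<Rightarrow> nat"
  assumes "n \<ge> 1"
    and "strict_mono_on {1..n} \<sigma>"
    and "\<sigma> ` {1..n} \<subseteq> {1..2 * n - 1}"
  shows "A_minor n \<sigma> = A_minor n (sigma_tilde n \<sigma>) \<and> A_minor n \<sigma> > 0"
proof -
  let ?P = "\<Prod>j<n. \<Prod>i<j. of_nat (\<sigma> (Suc j)) - of_nat (\<sigma> (Suc i)) :: rat"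
  have \<sigma>_bounds: "1 \<le> \<sigma> (Suc c)" "\<sigma> (Suc c) < 2 * n" if "c < n" for c
  proof -
    have "\<sigma> (Suc c) \<in> {1..2 * n - 1}"
      using assms(3) that by (auto simp: image_subset_iff)
    then show "1 \<le> \<sigma> (Suc c)" "\<sigma> (Suc c) < 2 * n"
      using that by auto
  qed
  have minor: "of_int (A_minor n \<sigma>) = binomial_row_coeff_det n * ?P"
    using A_minor_eq_vandermonde_prod[of n \<sigma>] \<sigma>_bounds(1) by simp
  have "1 \<le> sigma_tilde n \<sigma> (Suc c)" if "c < n" for c
    by (rule sigma_tilde_ge_1[OF _ that]) (rule \<sigma>_bounds(2))
  then have "of_int (A_minor n (sigma_tilde n \<sigma>)) = binomial_row_coeff_det n *
      (\<Prod>j<n. \<Prod>i<j. of_nat (sigma_tilde n \<sigma> (Suc j)) - of_nat (sigma_tilde n \<sigma> (Suc i)))"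
    by (rule A_minor_eq_vandermonde_prod)
  also have "\<dots> = binomial_row_coeff_det n * ?P"
    by (subst vandermonde_prod_sigma_tilde) (auto intro: \<sigma>_bounds(2))
  finally have minor_tilde: "of_int (A_minor n (sigma_tilde n \<sigma>)) = binomial_row_coeff_det n * ?P" .
  have "0 < ?P"
    using assms(2) by (intro vandermonde_prod_pos) (auto simp: strict_mono_on_def)
  then have "(0 :: rat) < of_int (A_minor n \<sigma>)"
    by (simp add: minor binomial_row_coeff_det_pos)
  with minor minor_tilde show ?thesis
    by (metis of_int_eq_iff of_int_less_iff of_int_0)
qed

end
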